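(* Let $S$ be a topological semigroup with an open right unit $e$. For every open neighborhood $U\subset S$ of $e$ there is a premetric $d:S\times S\to[0,1]$ such that: (1) $\overline d=\overline d^\circ\le d$; (2) $d$ is a left-subinvariant $\overline{\mathsf{dist}}$-continuous quasi-pseudometric with open balls on $S$; (3) $\overline d=\overline d^\circ$ is a left-subinvariant right-continuous $\overline{\mathsf{dist}}$-continuous quasi-pseudometric on $S$; (4) $B_d(x,1)\subset xU$ and $B_{\overline d}(x,1)\subset\mathrm{int}\,\overline{xU}$ for every $x\in S$; (5) if $e$ is a balanced point of $S$, then the quasi-pseudometrics $d$ and $\overline d=\overline d^\circ$ are subinvariant.
   Context: A topological semigroup is a topological space with a continuous associative multiplication. $e$ is a right unit if $xe=x$ for all $x$; an open right unit if moreover $xV$ is a neighborhood of $x$ for every neighborhood $V$ of $e$ and every $x\in S$. A point $e$ is balanced if it has a neighborhood base of open sets $V$ with $xV=Vx$ for all $x\in S$. A premetric is $d:S\times S\to[0,\infty)$ with $d(x,x)=0$; a quasi-pseudometric also satisfies $d(x,z)\le d(x,y)+d(y,z)$. $d$ is left-subinvariant if $d(zx,zy)\le d(x,y)$, right-subinvariant if $d(xz,yz)\le d(x,y)$, subinvariant if both, for all $x,y,z$. $B_d(x,\varepsilon)=\{y:d(x,y)<\varepsilon\}$, $B_d(A,\varepsilon)=\bigcup_{a\in A}B_d(a,\varepsilon)$. $d$ has open balls if all $B_d(x,\varepsilon)$ are open; right-continuous if $y\mapsto d(x,y)$ is continuous for each $x$. For non-empty $A$: $\overline d_A(x)=\inf\{\varepsilon>0:x\in\overline{B_d(A,\varepsilon)}\}$,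 $\overline d^\circ_A(x)=\inf\{\varepsilon>0:x\in B_d(A,\varepsilon)\cup\mathrm{int}\,\overline{B_d(A,\varepsilon)}\}$; $d$ is $\overline{\mathsf{dist}}$-continuous if all $\overline d_A$ are continuous. Regularization $\overline d(x,y)=\overline d_{\{x\}}(y)$, semiregularization $\overline d^\circ(x,y)=\overline d^\circ_{\{x\}}(y)$. *)

theory Defs
  imports "HOL-Analysis.Analysis"
begin

definition topological_semigroup :: "('a::{semigroup_mult,topological_space}) itself \<Rightarrow> bool" where
  "topological_semigroup _ \<longleftrightarrow> continuous_on UNIV (\<lambda>p::'a \<times> 'a. fst p * snd p)"

definition is_nhd :: "'a::topological_space set \<Rightarrow> 'a \<Rightarrow> bool" where
  "is_nhd V x \<longleftrightarrow> (\<exists>W. open W \<and> x \<in> W \<and> W \<subseteq> V)"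

definition lmult_set :: "'a::times \<Rightarrow> 'a set \<Rightarrow> 'a set" where
  "lmult_set x V = (\<lambda>v. x * v) ` V"

definition rmult_set :: "'a set \<Rightarrow> 'a::times \<Rightarrow> 'a set" where
  "rmult_set V x = (\<lambda>v. v * x) ` V"

definition right_unit :: "'a::times \<Rightarrow> bool" where
  "right_unit e \<longleftrightarrow> (\<forall>x. x * e = x)"

definition open_right_unit :: "'a::{times,topological_space} \<Rightarrow> bool" where
  "open_right_unit e \<longleftrightarrow> right_unit e \<and>
     (\<forall>V x. is_nhd V e \<longrightarrow> is_nhd (lmult_set x V) x)"

definition balanced_point :: "'a::{times,topological_space} \<Rightarrow> bool" where
  "balanced_point e \<longleftrightarrow>
     (\<forall>U. is_nhd U e \<longrightarrow> (\<exists>V. open V \<and> e \<in> V \<and> V \<subseteq> U \<and>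
         (\<forall>x. lmult_set x V = rmult_set V x)))"

definition premetric :: "('a \<Rightarrow> 'a \<Rightarrow> real) \<Rightarrow> bool" where
  "premetric d \<longleftrightarrow> (\<forall>x y. 0 \<le> d x y) \<and> (\<forall>x. d x x = 0)"

definition quasi_pseudometric :: "('a \<Rightarrow> 'a \<Rightarrow> real) \<Rightarrow> bool" where
  "quasi_pseudometric d \<longleftrightarrow> premetric d \<and> (\<forall>x y z. d x z \<le> d x y + d y z)"

definition left_subinvariant :: "('a::times \<Rightarrow> 'a \<Rightarrow> real) \<Rightarrow> bool" where
  "left_subinvariant d \<longleftrightarrow> (\<forall>x y z. d (z * x) (z * y) \<le> d x y)"

definition right_subinvariant :: "('a::times \<Rightarrow> 'a \<Rightarrow> real) \<Rightarrow> bool" where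
  "right_subinvariant d \<longleftrightarrow> (\<forall>x y z. d (x * z) (y * z) \<le> d x y)"

definition subinvariant :: "('a::times \<Rightarrow> 'a \<Rightarrow> real) \<Rightarrow> bool" where
  "subinvariant d \<longleftrightarrow> left_subinvariant d \<and> right_subinvariant d"

definition dball :: "('a \<Rightarrow> 'a \<Rightarrow> real) \<Rightarrow> 'a \<Rightarrow> real \<Rightarrow> 'a set" where
  "dball d x \<epsilon> = {y. d x y < \<epsilon>}"

definition dball_set :: "('a \<Rightarrow> 'a \<Rightarrow> real) \<Rightarrow> 'a set \<Rightarrow> real \<Rightarrow> 'a set" where
  "dball_set d A \<epsilon> = (\<Union>a\<in>A. dball d a \<epsilon>)"

definition has_open_balls :: "('a::topological_space \<Rightarrow> 'a \<Rightarrow> real) \<Rightarrow> bool" where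
  "has_open_balls d \<longleftrightarrow> (\<forall>x \<epsilon>. open (dball d x \<epsilon>))"

definition right_continuous :: "('a::topological_space \<Rightarrow> 'a \<Rightarrow> real) \<Rightarrow> bool" where
  "right_continuous d \<longleftrightarrow> (\<forall>x. continuous_on UNIV (d x))"

definition dbar_dist :: "('a::topological_space \<Rightarrow> 'a \<Rightarrow> real) \<Rightarrow> 'a set \<Rightarrow> 'a \<Rightarrow> real" where
  "dbar_dist d A x = Inf {\<epsilon>. \<epsilon> > 0 \<and> x \<in> closure (dball_set d A \<epsilon>)}"

definition dbarcirc_dist :: "('a::topological_space \<Rightarrow> 'a \<Rightarrow> real) \<Rightarrow> 'a set \<Rightarrow> 'a \<Rightarrow> real" where
  "dbarcirc_dist d A x = Inf {\<epsilon>. \<epsilon> > 0 \<and>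
      x \<in> dball_set d A \<epsilon> \<union> interior (closure (dball_set d A \<epsilon>))}"

definition dist_continuous :: "('a::topological_space \<Rightarrow> 'a \<Rightarrow> real) \<Rightarrow> bool" where
  "dist_continuous d \<longleftrightarrow> (\<forall>A. A \<noteq> {} \<longrightarrow> continuous_on UNIV (dbar_dist d A))"

definition regularization :: "('a::topological_space \<Rightarrow> 'a \<Rightarrow> real) \<Rightarrow> 'a \<Rightarrow> 'a \<Rightarrow> real" where
  "regularization d x y = dbar_dist d {x} y"

definition semiregularization :: "('a::topological_space \<Rightarrow> 'a \<Rightarrow> real) \<Rightarrow> 'a \<Rightarrow> 'a \<Rightarrow> real" where
  "semiregularization d x y = dbarcirc_dist d {x} y"

end

theory Submission
  imports Defs
begin

text \<open>Choose open neighbourhoods \<open>U \<supseteq> N\<^sub>0 \<supseteq> N\<^sub>1 \<supseteq> \<dots>\<close> of \<open>e\<close> with \<open>N\<^sub>n\<^sub>+\<^sub>1\<^sup>3 \<subseteq> N\<^sub>n\<close>,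
  taken balanced when \<open>e\<close> is. A chain from \<open>x\<close> is a product \<open>x u\<^sub>1 \<dots> u\<^sub>k\<close> with
  \<open>u\<^sub>i \<in> N\<^sub>n\<^sub>i\<close>; it has weight \<open>\<Sum> 2\<^sup>-\<^sup>n\<^sup>i\<close>. Let \<open>B x \<epsilon>\<close> be the set of ends of chains of weight
  \<open>< \<epsilon>\<close> (everything if \<open>\<epsilon> > 1\<close>) and \<open>d x y = inf {\<epsilon>. y \<in> B x \<epsilon>}\<close>.
  Concatenating chains gives the triangle inequality, multiplying on the left (or, for
  balanced \<open>N\<^sub>n\<close>, on the right) maps chains to chains of equal weight, and the open right
  unit makes every \<open>B x \<epsilon>\<close> a neighbourhood of \<open>x\<close>. Splitting a chain of weight \<open>< 2\<^sup>-\<^sup>n\<close>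
  at the link where its weight passes \<open>2\<^sup>-\<^sup>n\<^sup>-\<^sup>1\<close> shows by induction that it ends in
  \<open>x N\<^sub>n\<close>, so \<open>B x 1 \<subseteq> x U\<close>. Finally, the end of a fixed chain depends continuously on
  its start, so \<open>B y \<delta> \<subseteq> closure (B A (\<epsilon> + \<delta>))\<close> for every \<open>y\<close> in the closure of
  \<open>B A \<epsilon>\<close>; this yields the continuity of \<open>\<overline>d\<^sub>A\<close> and \<open>\<overline>d = \<overline>d\<^sup>\<circ>\<close>.\<close>

definition level_inf :: "(real \<Rightarrow> 'a set) \<Rightarrow> 'a \<Rightarrow> real" where
  "level_inf Q x = Inf {\<epsilon>. 0 < \<epsilon> \<and> x \<in> Q \<epsilon>}"

context
  fixes Q :: "real \<Rightarrow> 'a set" and x :: 'a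
  assumes mem_gt_1: "\<And>\<epsilon>. 1 < \<epsilon> \<Longrightarrow> x \<in> Q \<epsilon>"
begin

lemma levels_nonempty: "{\<epsilon>. 0 < \<epsilon> \<and> x \<in> Q \<epsilon>} \<noteq> {}"
  using mem_gt_1[of 2] by (auto intro!: exI[of _ "2::real"])

lemma level_inf_nonneg: "0 \<le> level_inf Q x"
  unfolding level_inf_def using levels_nonempty by (auto intro: cInf_greatest)

lemma level_inf_greatest: "(\<And>\<epsilon>. 0 < \<epsilon> \<Longrightarrow> x \<in> Q \<epsilon> \<Longrightarrow> c \<le> \<epsilon>) \<Longrightarrow> c \<le> level_inf Q x"
  unfolding level_inf_def using levels_nonempty by (auto intro: cInf_greatest)

lemma level_inf_less_imp: "level_inf Q x < c \<Longrightarrow> \<exists>\<epsilon>>0. \<epsilon> < c \<and> x \<in> Q \<epsilon>"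
  unfolding level_inf_def using cInf_lessD[OF levels_nonempty] by auto

end

lemma level_inf_le: "x \<in> Q \<epsilon> \<Longrightarrow> 0 < \<epsilon> \<Longrightarrow> level_inf Q x \<le> \<epsilon>"
  unfolding level_inf_def by (rule cInf_lower) (auto intro: bdd_belowI[of _ 0])

lemma level_inf_le_1:
  assumes "\<And>\<epsilon>. 1 < \<epsilon> \<Longrightarrow> x \<in> Q \<epsilon>"
  shows "level_inf Q x \<le> 1"
  by (rule dense_ge) (use assms level_inf_le in force)

lemma level_inf_mono:
  assumes "\<And>\<epsilon>. 0 < \<epsilon> \<Longrightarrow> y \<in> Q' \<epsilon> \<Longrightarrow> x \<in> Q \<epsilon>" and "\<And>\<epsilon>. 1 < \<epsilon> \<Longrightarrow> y \<in> Q' \<epsilon>"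
  shows "level_inf Q x \<le> level_inf Q' y"
proof (rule level_inf_greatest[OF assms(2)])
  fix \<epsilon> :: real
  assume "0 < \<epsilon>" "y \<in> Q' \<epsilon>"
  then show "level_inf Q x \<le> \<epsilon>" by (intro level_inf_le assms(1))
qed

lemma continuous_on_UNIV_semicontinuous:
  fixes f :: "'a::topological_space \<Rightarrow> real"
  assumes "\<And>x a. a < f x \<Longrightarrow> eventually (\<lambda>y. a < f y) (nhds x)"
    and "\<And>x a. f x < a \<Longrightarrow> eventually (\<lambda>y. f y < a) (nhds x)"
  shows "continuous_on UNIV f"
proof -
  have "(f \<longlongrightarrow> f x) (nhds x)" for x by (rule order_tendstoI) (use assms in auto)
  then show ?thesis
    unfolding continuous_on_def at_within_def by (blast intro: tendsto_mono[OF inf_le1])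
qed

lemma continuous_on_lmult:
  assumes "topological_semigroup TYPE('a::{semigroup_mult,topological_space})"
  shows "continuous_on UNIV (\<lambda>y::'a. z * y)"
proof -
  have "continuous_on UNIV (\<lambda>p::'a \<times> 'a. fst p * snd p)"
    using assms by (simp add: topological_semigroup_def)
  from continuous_on_compose[OF continuous_on_Pair[OF continuous_on_const continuous_on_id]
      continuous_on_subset[OF this]]
  show ?thesis by (simp add: o_def)
qed

lemma continuous_on_rmult:
  assumes "topological_semigroup TYPE('a::{semigroup_mult,topological_space})"
  shows "continuous_on UNIV (\<lambda>y::'a. y * z)"
proof -
  have "continuous_on UNIV (\<lambda>p::'a \<times> 'a. fst p * snd p)"
    using assms by (simp add: topological_semigroup_def)
  from continuous_on_compose[OF continuous_on_Pair[OF continuous_on_id continuous_on_const]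
      continuous_on_subset[OF this]]
  show ?thesis by (simp add: o_def)
qed

locale ball_system =
  fixes B :: "'a::{semigroup_mult,topological_space} \<Rightarrow> real \<Rightarrow> 'a set"
  assumes topological_semigroup: "topological_semigroup TYPE('a)"
    and ball_nonpos: "\<epsilon> \<le> 0 \<Longrightarrow> B x \<epsilon> = {}"
    and centre_in_ball: "0 < \<epsilon> \<Longrightarrow> x \<in> B x \<epsilon>"
    and ball_gt_1: "1 < \<epsilon> \<Longrightarrow> y \<in> B x \<epsilon>"
    and ball_mono: "\<epsilon> \<le> \<delta> \<Longrightarrow> B x \<epsilon> \<subseteq> B x \<delta>"
    and ball_smaller_radius: "y \<in> B x \<epsilon> \<Longrightarrow> \<exists>\<epsilon>'<\<epsilon>. y \<in> B x \<epsilon>'"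
    and ball_trans: "y \<in> B x \<epsilon> \<Longrightarrow> z \<in> B y \<delta> \<Longrightarrow> z \<in> B x (\<epsilon> + \<delta>)"
    and ball_lmult: "y \<in> B x \<epsilon> \<Longrightarrow> z * y \<in> B (z * x) \<epsilon>"
    and ball_is_nhd: "0 < \<epsilon> \<Longrightarrow> is_nhd (B x \<epsilon>) x"
    and ball_continuous_shift:
      "z \<in> B y \<delta> \<Longrightarrow> \<exists>g. continuous_on UNIV g \<and> g y = z \<and> (\<forall>y'. g y' \<in> B y' \<delta>)"
begin

definition d :: "'a \<Rightarrow> 'a \<Rightarrow> real" where
  "d x = level_inf (B x)"

definition balls :: "'a set \<Rightarrow> real \<Rightarrow> 'a set" where
  "balls A \<epsilon> = (\<Union>a\<in>A. B a \<epsilon>)"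

lemma ball_pos: "y \<in> B x \<epsilon> \<Longrightarrow> 0 < \<epsilon>"
  by (metis ball_nonpos empty_iff not_le)

lemma d_less_imp: "d x y < c \<Longrightarrow> \<exists>\<epsilon>>0. \<epsilon> < c \<and> y \<in> B x \<epsilon>"
  unfolding d_def by (rule level_inf_less_imp) (rule ball_gt_1)

lemma d_le_radius: "y \<in> B x \<epsilon> \<Longrightarrow> d x y \<le> \<epsilon>"
  unfolding d_def using ball_pos by (blast intro: level_inf_le)

lemma dball_d: "dball d x \<epsilon> = B x \<epsilon>"
proof safe
  fix y
  assume "y \<in> dball d x \<epsilon>"
  then obtain \<epsilon>' where "\<epsilon>' < \<epsilon>" "y \<in> B x \<epsilon>'"
    using d_less_imp[of x y \<epsilon>] by (auto simp: dball_def)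
  then show "y \<in> B x \<epsilon>" using ball_mono[of \<epsilon>' \<epsilon>] by auto
next
  fix y
  assume "y \<in> B x \<epsilon>"
  then obtain \<epsilon>' where "\<epsilon>' < \<epsilon>" "y \<in> B x \<epsilon>'" using ball_smaller_radius by blast
  then show "y \<in> dball d x \<epsilon>" using d_le_radius by (fastforce simp: dball_def)
qed

lemma dball_set_d: "dball_set d A \<epsilon> = balls A \<epsilon>"
  by (simp add: dball_set_def balls_def dball_d)

lemma balls_singleton [simp]: "balls {x} = B x"
  by (simp add: balls_def fun_eq_iff)

lemma open_ball: "open (B x \<epsilon>)"
proof (subst open_subopen, intro ballI)
  fix y
  assume "y \<in> B x \<epsilon>"
  then obtain \<epsilon>' where \<epsilon>': "\<epsilon>' < \<epsilon>" "y \<in> B x \<epsilon>'" using ball_smaller_radius by blast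
  then obtain W where W: "open W" "y \<in> W" "W \<subseteq> B y (\<epsilon> - \<epsilon>')"
    using ball_is_nhd[of "\<epsilon> - \<epsilon>'" y] by (auto simp: is_nhd_def)
  have "W \<subseteq> B x \<epsilon>" using W(3) ball_trans[OF \<epsilon>'(2)] by fastforce
  then show "\<exists>W. open W \<and> y \<in> W \<and> W \<subseteq> B x \<epsilon>" using W by blast
qed

lemma has_open_balls_d: "has_open_balls d"
  by (simp add: has_open_balls_def dball_d open_ball)

lemma d_nonneg: "0 \<le> d x y"
  unfolding d_def by (rule level_inf_nonneg) (rule ball_gt_1)

lemma d_le_1: "d x y \<le> 1"
  unfolding d_def by (rule level_inf_le_1) (rule ball_gt_1)

lemma d_self: "d x x = 0"
proof -
  have "d x x \<le> \<epsilon>" if "0 < \<epsilon>" for \<epsilon> using d_le_radius[OF centre_in_ball[OF that]] .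
  then have "d x x \<le> 0" by (rule dense_ge)
  then show ?thesis using d_nonneg[of x x] by simp
qed

lemma d_triangle: "d x z \<le> d x y + d y z"
proof (rule field_le_epsilon)
  fix t :: real
  assume "0 < t"
  then obtain \<epsilon> \<delta> where "\<epsilon> < d x y + t/2" "y \<in> B x \<epsilon>" "\<delta> < d y z + t/2" "z \<in> B y \<delta>"
    using d_less_imp[of x y "d x y + t/2"] d_less_imp[of y z "d y z + t/2"] by auto
  moreover from this have "d x z \<le> \<epsilon> + \<delta>" by (intro d_le_radius ball_trans)
  ultimately show "d x z \<le> d x y + d y z + t" by linarith
qed

lemma quasi_pseudometric_d: "quasi_pseudometric d"
  unfolding quasi_pseudometric_def premetric_def using d_nonneg d_self d_triangle by blast

lemma left_subinvariant_d: "left_subinvariant d"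
  unfolding left_subinvariant_def d_def by (intro allI level_inf_mono) (auto intro: ball_lmult ball_gt_1)

lemma closure_balls_absorb:
  assumes "y \<in> closure (balls A \<epsilon>)" "z \<in> B y \<delta>"
  shows "z \<in> closure (balls A (\<epsilon> + \<delta>))"
proof -
  obtain g where g: "continuous_on UNIV g" "g y = z" "\<And>y'. g y' \<in> B y' \<delta>"
    using ball_continuous_shift[OF assms(2)] by blast
  have "g ` balls A \<epsilon> \<subseteq> balls A (\<epsilon> + \<delta>)"
  proof
    fix w
    assume "w \<in> g ` balls A \<epsilon>"
    then obtain a v where "a \<in> A" "v \<in> B a \<epsilon>" "w = g v" by (auto simp: balls_def)
    then show "w \<in> balls A (\<epsilon> + \<delta>)" using ball_trans[OF _ g(3)] by (auto simp: balls_def)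
  qed
  then have "g ` balls A \<epsilon> \<subseteq> closure (balls A (\<epsilon> + \<delta>))"
    using closure_subset by blast
  then have "g ` closure (balls A \<epsilon>) \<subseteq> closure (balls A (\<epsilon> + \<delta>))"
    by (intro image_closure_subset continuous_on_subset[OF g(1)]) auto
  then show ?thesis using assms(1) g(2) by blast
qed

lemma dbar_dist_d: "dbar_dist d A = level_inf (\<lambda>\<epsilon>. closure (balls A \<epsilon>))"
  by (rule ext) (simp only: dbar_dist_def level_inf_def dball_set_d)

context
  fixes A :: "'a set"
  assumes A: "A \<noteq> {}"
begin

lemma closure_balls_gt_1:
  assumes "1 < \<epsilon>"
  shows "y \<in> closure (balls A \<epsilon>)"
proof -
  have "y \<in> balls A \<epsilon>" using A ball_gt_1[OF assms] unfolding balls_def by blast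
  then show ?thesis using closure_subset by blast
qed

lemma dbar_dist_d_nonneg: "0 \<le> dbar_dist d A y"
  unfolding dbar_dist_d by (rule level_inf_nonneg) (rule closure_balls_gt_1)

lemma dbar_dist_d_lsc:
  assumes "a < dbar_dist d A x"
  shows "eventually (\<lambda>y. a < dbar_dist d A y) (nhds x)"
proof (cases "a < 0")
  case True
  then show ?thesis using dbar_dist_d_nonneg by (auto intro: always_eventually less_le_trans)
next
  case False
  define c where "c = (a + dbar_dist d A x) / 2"
  have c: "a < c" "c < dbar_dist d A x" "0 < c" using assms False by (auto simp: c_def)
  then have x: "x \<in> - closure (balls A c)" unfolding dbar_dist_d using level_inf_le by fastforce
  have above: "a < dbar_dist d A y" if y: "y \<in> - closure (balls A c)" for y
  proof -
    have "c \<le> dbar_dist d A y" unfolding dbar_dist_d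
    proof (rule level_inf_greatest)
      fix \<epsilon> :: real
      assume "y \<in> closure (balls A \<epsilon>)"
      then show "c \<le> \<epsilon>"
        using y closure_mono[of "balls A \<epsilon>" "balls A c"] ball_mono[of \<epsilon> c]
        by (cases "\<epsilon> \<le> c") (auto simp: balls_def)
    qed (rule closure_balls_gt_1)
    then show ?thesis using c(1) by simp
  qed
  show ?thesis
    unfolding eventually_nhds
    by (intro exI[of _ "- closure (balls A c)"] conjI ballI open_Compl closed_closure x above)
qed

lemma dbar_dist_d_usc:
  assumes "dbar_dist d A x < a"
  shows "eventually (\<lambda>y. dbar_dist d A y < a) (nhds x)"
proof -
  obtain \<epsilon> where \<epsilon>: "0 < \<epsilon>" "\<epsilon> < a" "x \<in> closure (balls A \<epsilon>)"
    using level_inf_less_imp[where Q="\<lambda>\<epsilon>. closure (balls A \<epsilon>)", OF closure_balls_gt_1] assms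
    unfolding dbar_dist_d by blast
  define \<delta> where "\<delta> = (a - \<epsilon>) / 2"
  have \<delta>: "0 < \<delta>" "\<epsilon> + \<delta> < a" using \<epsilon>(2) unfolding \<delta>_def by (auto simp: field_simps)
  have "dbar_dist d A y < a" if "y \<in> B x \<delta>" for y
  proof -
    have "dbar_dist d A y \<le> \<epsilon> + \<delta>"
      unfolding dbar_dist_d using closure_balls_absorb[OF \<epsilon>(3) that] \<epsilon>(1) \<delta>(1)
      by (intro level_inf_le) auto
    then show ?thesis using \<delta>(2) by linarith
  qed
  then show ?thesis
    unfolding eventually_nhds using open_ball centre_in_ball[OF \<delta>(1)]
    by (intro exI[of _ "B x \<delta>"]) auto
qed

lemma continuous_on_dbar_dist_d: "continuous_on UNIV (dbar_dist d A)"
  by (rule continuous_on_UNIV_semicontinuous[OF dbar_dist_d_lsc dbar_dist_d_usc])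

end

lemma dist_continuous_d: "dist_continuous d"
  unfolding dist_continuous_def by (simp add: continuous_on_dbar_dist_d)

lemma closure_ball_gt_1: "1 < \<epsilon> \<Longrightarrow> y \<in> closure (B x \<epsilon>)"
  using ball_gt_1 closure_subset by blast

lemma closure_ball_absorb: "y \<in> closure (B x \<epsilon>) \<Longrightarrow> z \<in> B y \<delta> \<Longrightarrow> z \<in> closure (B x (\<epsilon> + \<delta>))"
  using closure_balls_absorb[of y "{x}"] by simp

lemma closure_ball_in_interior:
  assumes "y \<in> closure (B x \<epsilon>)" "0 < \<delta>"
  shows "y \<in> interior (closure (B x (\<epsilon> + \<delta>)))"
proof -
  have "B y \<delta> \<subseteq> closure (B x (\<epsilon> + \<delta>))" using closure_ball_absorb[OF assms(1)] by blast
  then show ?thesis using interiorI[OF open_ball centre_in_ball[OF assms(2)]] by blast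
qed

lemma regularization_d: "regularization d x = level_inf (\<lambda>\<epsilon>. closure (B x \<epsilon>))"
  by (rule ext) (simp add: regularization_def dbar_dist_d)

lemma regularization_d_less_imp:
  "regularization d x y < c \<Longrightarrow> \<exists>\<epsilon>>0. \<epsilon> < c \<and> y \<in> closure (B x \<epsilon>)"
  unfolding regularization_d by (rule level_inf_less_imp) (rule closure_ball_gt_1)

lemma regularization_d_le_radius:
  "y \<in> closure (B x \<epsilon>) \<Longrightarrow> 0 < \<epsilon> \<Longrightarrow> regularization d x y \<le> \<epsilon>"
  unfolding regularization_d by (rule level_inf_le)

lemma regularization_le_d: "regularization d x y \<le> d x y"
  unfolding regularization_d d_def
  by (rule level_inf_mono) (auto intro: closure_subset[THEN subsetD] ball_gt_1)

lemma semiregularization_eq_regularization_d: "semiregularization d = regularization d"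
proof (intro ext antisym)
  fix x y
  have semireg: "semiregularization d x y = level_inf (\<lambda>\<epsilon>. B x \<epsilon> \<union> interior (closure (B x \<epsilon>))) y"
    by (simp add: semiregularization_def dbarcirc_dist_def level_inf_def dball_set_d)
  show "regularization d x y \<le> semiregularization d x y"
    unfolding semireg regularization_d
    by (rule level_inf_mono) (auto intro: ball_gt_1 closure_subset[THEN subsetD] interior_subset[THEN subsetD])
  show "semiregularization d x y \<le> regularization d x y"
    unfolding regularization_d
  proof (rule level_inf_greatest)
    fix \<epsilon> :: real
    assume "0 < \<epsilon>" "y \<in> closure (B x \<epsilon>)"
    then have "semiregularization d x y \<le> \<epsilon> + t" if "0 < t" for t
      unfolding semireg using closure_ball_in_interior[OF _ that] that by (intro level_inf_le) auto
    then show "semiregularization d x y \<le> \<epsilon>" by (rule field_le_epsilon)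
  qed (rule closure_ball_gt_1)
qed

lemma regularization_d_nonneg: "0 \<le> regularization d x y"
  unfolding regularization_d by (rule level_inf_nonneg) (rule closure_ball_gt_1)

lemma regularization_d_self: "regularization d x x = 0"
  using regularization_le_d[of x x] regularization_d_nonneg[of x x] by (simp add: d_self)

lemma regularization_d_triangle:
  "regularization d x z \<le> regularization d x y + regularization d y z"
proof (rule field_le_epsilon)
  fix t :: real
  assume "0 < t"
  then obtain \<epsilon> \<delta> where \<epsilon>\<delta>: "0 < \<epsilon>" "\<epsilon> < regularization d x y + t/2" "y \<in> closure (B x \<epsilon>)"
    "0 < \<delta>" "\<delta> < regularization d y z + t/2" "z \<in> closure (B y \<delta>)"
    using regularization_d_less_imp[of x y "regularization d x y + t/2"]
      regularization_d_less_imp[of y z "regularization d y z + t/2"] by auto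
  have "closure (B y \<delta>) \<subseteq> closure (B x (\<epsilon> + \<delta>))"
    using closure_ball_absorb[OF \<epsilon>\<delta>(3)] by (intro closure_minimal) auto
  then have "regularization d x z \<le> \<epsilon> + \<delta>"
    using \<epsilon>\<delta> by (intro regularization_d_le_radius) auto
  then show "regularization d x z \<le> regularization d x y + regularization d y z + t"
    using \<epsilon>\<delta> by linarith
qed

lemma quasi_pseudometric_regularization_d: "quasi_pseudometric (regularization d)"
  unfolding quasi_pseudometric_def premetric_def
  using regularization_d_nonneg regularization_d_self regularization_d_triangle by blast

lemma closure_ball_lmult:
  assumes "y \<in> closure (B x \<epsilon>)"
  shows "z * y \<in> closure (B (z * x) \<epsilon>)"
proof -
  have "(\<lambda>y. z * y) ` B x \<epsilon> \<subseteq> closure (B (z * x) \<epsilon>)"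
    using ball_lmult closure_subset by blast
  then have "(\<lambda>y. z * y) ` closure (B x \<epsilon>) \<subseteq> closure (B (z * x) \<epsilon>)"
    by (intro image_closure_subset continuous_on_subset[OF continuous_on_lmult[OF topological_semigroup]])
      auto
  with assms show ?thesis by blast
qed

lemma left_subinvariant_regularization_d: "left_subinvariant (regularization d)"
  unfolding left_subinvariant_def regularization_d
  by (intro allI level_inf_mono) (auto intro: closure_ball_lmult closure_ball_gt_1)

lemma right_continuous_regularization_d: "right_continuous (regularization d)"
  unfolding right_continuous_def regularization_def using continuous_on_dbar_dist_d by simp

lemma closure_dball_set_regularization_d:
  "closure (dball_set (regularization d) A \<epsilon>) = closure (balls A \<epsilon>)"
proof (rule antisym)
  have "dball_set (regularization d) A \<epsilon> \<subseteq> closure (balls A \<epsilon>)"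
  proof
    fix y
    assume "y \<in> dball_set (regularization d) A \<epsilon>"
    then obtain a \<epsilon>' where "a \<in> A" "\<epsilon>' < \<epsilon>" "y \<in> closure (B a \<epsilon>')"
      using regularization_d_less_imp by (fastforce simp: dball_set_def dball_def)
    moreover from this have "B a \<epsilon>' \<subseteq> balls A \<epsilon>"
      using ball_mono[of \<epsilon>' \<epsilon> a] by (auto simp: balls_def)
    ultimately show "y \<in> closure (balls A \<epsilon>)" using closure_mono by blast
  qed
  then show "closure (dball_set (regularization d) A \<epsilon>) \<subseteq> closure (balls A \<epsilon>)"
    by (simp add: closure_minimal)
  have "balls A \<epsilon> \<subseteq> dball_set (regularization d) A \<epsilon>"
  proof
    fix y
    assume "y \<in> balls A \<epsilon>"
    then obtain a where a: "a \<in> A" "y \<in> dball d a \<epsilon>" by (auto simp: balls_def dball_d)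
    then have "regularization d a y < \<epsilon>" using regularization_le_d[of a y] by (simp add: dball_def)
    with a(1) show "y \<in> dball_set (regularization d) A \<epsilon>" by (auto simp: dball_set_def dball_def)
  qed
  then show "closure (balls A \<epsilon>) \<subseteq> closure (dball_set (regularization d) A \<epsilon>)"
    by (rule closure_mono)
qed

lemma dist_continuous_regularization_d: "dist_continuous (regularization d)"
proof -
  have "dbar_dist (regularization d) A = dbar_dist d A" for A
    by (simp add: dbar_dist_def dbar_dist_d level_inf_def closure_dball_set_regularization_d fun_eq_iff)
  then show ?thesis using dist_continuous_d by (simp add: dist_continuous_def)
qed

lemma dball_regularization_d_1: "dball (regularization d) x 1 \<subseteq> interior (closure (B x 1))"
proof
  fix y
  assume "y \<in> dball (regularization d) x 1"
  then obtain \<epsilon> where "0 < \<epsilon>" "\<epsilon> < 1" "y \<in> closure (B x \<epsilon>)"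
    using regularization_d_less_imp[of x y 1] by (auto simp: dball_def)
  then show "y \<in> interior (closure (B x 1))"
    using closure_ball_in_interior[of y x \<epsilon> "1 - \<epsilon>"] by simp
qed

context
  assumes ball_rmult: "\<And>x y z \<epsilon>. y \<in> B x \<epsilon> \<Longrightarrow> y * z \<in> B (x * z) \<epsilon>"
begin

lemma right_subinvariant_d: "right_subinvariant d"
  unfolding right_subinvariant_def d_def
  by (intro allI level_inf_mono) (auto intro: ball_rmult ball_gt_1)

lemma closure_ball_rmult:
  assumes "y \<in> closure (B x \<epsilon>)"
  shows "y * z \<in> closure (B (x * z) \<epsilon>)"
proof -
  have "(\<lambda>y. y * z) ` B x \<epsilon> \<subseteq> closure (B (x * z) \<epsilon>)"
    using ball_rmult closure_subset by blast
  then have "(\<lambda>y. y * z) ` closure (B x \<epsilon>) \<subseteq> closure (B (x * z) \<epsilon>)"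
    by (intro image_closure_subset continuous_on_subset[OF continuous_on_rmult[OF topological_semigroup]])
      auto
  with assms show ?thesis by blast
qed

lemma right_subinvariant_regularization_d: "right_subinvariant (regularization d)"
  unfolding right_subinvariant_def regularization_d
  by (intro allI level_inf_mono) (auto intro: closure_ball_rmult closure_ball_gt_1)

end

end

lemma idempotent_square_nhd:
  fixes e :: "'a::{semigroup_mult,topological_space}"
  assumes "topological_semigroup TYPE('a)" "e * e = e" "open Q" "e \<in> Q"
  shows "\<exists>P. open P \<and> e \<in> P \<and> (\<forall>a\<in>P. \<forall>b\<in>P. a * b \<in> Q)"
proof -
  have "continuous_on UNIV (\<lambda>p::'a \<times> 'a. fst p * snd p)"
    using assms(1) by (simp add: topological_semigroup_def)
  then have "open ((\<lambda>p::'a \<times> 'a. fst p * snd p) -` Q)"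
    using assms(3) continuous_on_open_vimage[of UNIV] by auto
  moreover have "(e, e) \<in> (\<lambda>p::'a \<times> 'a. fst p * snd p) -` Q" using assms(2,4) by simp
  ultimately obtain A B where "open A" "open B" "e \<in> A" "e \<in> B"
    and AB: "A \<times> B \<subseteq> (\<lambda>p::'a \<times> 'a. fst p * snd p) -` Q"
    by (rule open_prod_elim) blast
  moreover have "a * b \<in> Q" if "a \<in> A \<inter> B" "b \<in> A \<inter> B" for a b
    using AB that by auto
  ultimately show ?thesis by (intro exI[of _ "A \<inter> B"]) auto
qed

lemma cube_nhd_exists:
  fixes e :: "'a::{semigroup_mult,topological_space}"
  assumes "topological_semigroup TYPE('a)" "right_unit e" "open Q" "e \<in> Q"
  shows "\<exists>P. open P \<and> e \<in> P \<and> (\<forall>a\<in>P. \<forall>b\<in>P. \<forall>c\<in>P. a * b * c \<in> Q) \<and>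
    (balanced_point e \<longrightarrow> (\<forall>x. lmult_set x P = rmult_set P x))"
proof -
  have ee: "e * e = e" using assms(2) by (simp add: right_unit_def)
  obtain P1 where P1: "open P1" "e \<in> P1" "\<forall>a\<in>P1. \<forall>b\<in>P1. a * b \<in> Q"
    using idempotent_square_nhd[OF assms(1) ee assms(3,4)] by blast
  obtain P2 where P2: "open P2" "e \<in> P2" "\<forall>a\<in>P2. \<forall>b\<in>P2. a * b \<in> P1"
    using idempotent_square_nhd[OF assms(1) ee P1(1,2)] by blast
  define P where "P = P1 \<inter> P2"
  have P: "open P" "e \<in> P" "\<forall>a\<in>P. \<forall>b\<in>P. \<forall>c\<in>P. a * b * c \<in> Q"
    unfolding P_def using P1 P2 by (simp_all add: open_Int)
  show ?thesis
  proof (cases "balanced_point e")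
    case True
    have "is_nhd P e" using P by (auto simp: is_nhd_def)
    then obtain V where V: "open V" "e \<in> V" "V \<subseteq> P" "\<forall>x. lmult_set x V = rmult_set V x"
      using True[unfolded balanced_point_def, rule_format, OF \<open>is_nhd P e\<close>] by blast
    have "\<forall>a\<in>V. \<forall>b\<in>V. \<forall>c\<in>V. a * b * c \<in> Q" using V(3) P(3) by (meson subsetD)
    then show ?thesis using V(1,2,4) by (intro exI[of _ V]) simp
  next
    case False
    then show ?thesis using P by (intro exI[of _ P]) simp
  qed
qed

definition cube_nhd :: "'a::{semigroup_mult,topological_space} \<Rightarrow> 'a set \<Rightarrow> 'a set" where
  "cube_nhd e Q = (SOME P. open P \<and> e \<in> P \<and> (\<forall>a\<in>P. \<forall>b\<in>P. \<forall>c\<in>P. a * b * c \<in> Q) \<and>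
     (balanced_point e \<longrightarrow> (\<forall>x. lmult_set x P = rmult_set P x)))"

lemma cube_nhd:
  fixes e :: "'a::{semigroup_mult,topological_space}"
  assumes "topological_semigroup TYPE('a)" "right_unit e" "open Q" "e \<in> Q"
  shows "open (cube_nhd e Q)" "e \<in> cube_nhd e Q"
    "\<And>a b c. a \<in> cube_nhd e Q \<Longrightarrow> b \<in> cube_nhd e Q \<Longrightarrow> c \<in> cube_nhd e Q \<Longrightarrow> a * b * c \<in> Q"
    "balanced_point e \<Longrightarrow> lmult_set x (cube_nhd e Q) = rmult_set (cube_nhd e Q) x"
  using someI_ex[OF cube_nhd_exists[OF assms]] unfolding cube_nhd_def[symmetric] by blast+

primrec cube_nhd_seq :: "'a::{semigroup_mult,topological_space} \<Rightarrow> 'a set \<Rightarrow> nat \<Rightarrow> 'a set" where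
  "cube_nhd_seq e U 0 = cube_nhd e U"
| "cube_nhd_seq e U (Suc n) = cube_nhd e (cube_nhd_seq e U n)"

definition chain_in :: "(nat \<Rightarrow> 'a set) \<Rightarrow> (nat \<times> 'a) list \<Rightarrow> bool" where
  "chain_in N cs \<longleftrightarrow> (\<forall>(n, u)\<in>set cs. u \<in> N n)"

definition chain_weight :: "(nat \<times> 'a) list \<Rightarrow> real" where
  "chain_weight cs = (\<Sum>(n, u)\<leftarrow>cs. (1/2) ^ n)"

definition chain_end :: "'a::times \<Rightarrow> (nat \<times> 'a) list \<Rightarrow> 'a" where
  "chain_end x cs = foldl (\<lambda>y (n, u). y * u) x cs"

definition chain_ball :: "(nat \<Rightarrow> 'a set) \<Rightarrow> 'a::times \<Rightarrow> real \<Rightarrow> 'a set" where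
  "chain_ball N x \<epsilon> =
    {y. 1 < \<epsilon> \<or> (\<exists>cs. chain_in N cs \<and> chain_weight cs < \<epsilon> \<and> y = chain_end x cs)}"

lemma chain_in_simps [simp]:
  "chain_in N []"
  "chain_in N ((n, u) # cs) \<longleftrightarrow> u \<in> N n \<and> chain_in N cs"
  "chain_in N (cs @ ds) \<longleftrightarrow> chain_in N cs \<and> chain_in N ds"
  by (auto simp: chain_in_def)

lemma chain_weight_simps [simp]:
  "chain_weight [] = 0"
  "chain_weight ((n, u) # cs) = (1/2) ^ n + chain_weight cs"
  "chain_weight (cs @ ds) = chain_weight cs + chain_weight ds"
  by (simp_all add: chain_weight_def)

lemma chain_end_simps [simp]:
  "chain_end x [] = x"
  "chain_end x ((n, u) # cs) = chain_end (x * u) cs"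
  "chain_end x (cs @ ds) = chain_end (chain_end x cs) ds"
  by (simp_all add: chain_end_def)

lemma chain_weight_nonneg: "0 \<le> chain_weight cs"
  by (induction cs) auto

lemma chain_ball_pos:
  fixes N :: "nat \<Rightarrow> 'a::times set"
  assumes "y \<in> chain_ball N x \<epsilon>"
  shows "0 < \<epsilon>"
proof -
  have "1 < \<epsilon> \<or> (\<exists>cs :: (nat \<times> 'a) list. chain_weight cs < \<epsilon>)"
    using assms unfolding chain_ball_def by blast
  then show ?thesis using chain_weight_nonneg by (meson le_less_trans less_trans zero_less_one)
qed

lemma chain_end_lmult: "chain_end (z * x) cs = z * chain_end (x::'a::semigroup_mult) cs"
  by (induction cs arbitrary: x) (auto simp: mult.assoc)

lemma continuous_on_chain_end:
  assumes "topological_semigroup TYPE('a::{semigroup_mult,topological_space})"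
  shows "continuous_on UNIV (\<lambda>x::'a. chain_end x cs)"
proof (induction cs)
  case Nil
  then show ?case by (simp add: continuous_on_id)
next
  case (Cons c cs)
  obtain n u where "c = (n, u)" by fastforce
  with continuous_on_compose[OF continuous_on_rmult[OF assms, of u] continuous_on_subset[OF Cons]]
  show ?case by (simp add: o_def)
qed

lemma chain_split:
  "cs \<noteq> [] \<Longrightarrow> 0 \<le> a \<Longrightarrow> a < h \<Longrightarrow> a + chain_weight cs < 2 * h \<Longrightarrow>
    \<exists>pre c suf. cs = pre @ c # suf \<and> a + chain_weight pre < h \<and> chain_weight suf < h"
proof (induction cs arbitrary: a)
  case Nil
  then show ?case by simp
next
  case (Cons c cs)
  obtain n u where c: "c = (n, u)" by fastforce
  define p :: real where "p = (1/2) ^ n"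
  have weight: "a + p + chain_weight cs < 2 * h" using Cons.prems(4) by (simp add: c p_def add.assoc)
  show ?case
  proof (cases "h \<le> a + p \<or> cs = []")
    case True
    then have "chain_weight cs < h" using weight Cons.prems(2,3) by auto
    with Cons.prems(3) show ?thesis by (intro exI[of _ "[]"] exI[of _ c] exI[of _ cs]) simp
  next
    case False
    then have "cs \<noteq> []" "a + p < h" by auto
    moreover have "0 \<le> a + p" using Cons.prems(2) by (simp add: p_def)
    ultimately obtain pre c' suf where split: "cs = pre @ c' # suf"
      "a + p + chain_weight pre < h" "chain_weight suf < h"
      using Cons.IH weight by blast
    then have "c # cs = (c # pre) @ c' # suf" "a + chain_weight (c # pre) < h"
      by (simp_all add: c p_def add.assoc)
    with split(3) show ?thesis by blast
  qed
qed

locale nhd_tower =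
  fixes e :: "'a::{semigroup_mult,topological_space}" and U :: "'a set" and N :: "nat \<Rightarrow> 'a set"
  assumes topological_semigroup: "topological_semigroup TYPE('a)"
    and open_right_unit: "open_right_unit e"
    and open_N: "open (N n)"
    and unit_in_N: "e \<in> N n"
    and N_cube: "a \<in> N (Suc n) \<Longrightarrow> b \<in> N (Suc n) \<Longrightarrow> c \<in> N (Suc n) \<Longrightarrow> a * b * c \<in> N n"
    and N_0_subset: "N 0 \<subseteq> U"
    and N_balanced: "balanced_point e \<Longrightarrow> lmult_set x (N n) = rmult_set (N n) x"
begin

lemma mult_unit [simp]: "x * e = x"
  using open_right_unit by (simp add: open_right_unit_def right_unit_def)

lemma N_Suc_subset: "N (Suc n) \<subseteq> N n"
proof
  fix a
  assume "a \<in> N (Suc n)"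
  then have "a * e * e \<in> N n" using N_cube unit_in_N by blast
  then show "a \<in> N n" by simp
qed

lemma N_antimono: "m \<le> k \<Longrightarrow> N k \<subseteq> N m"
  by (induction k rule: dec_induct) (use N_Suc_subset in auto)

lemma chain_end_in_lmult_N:
  "chain_in N cs \<Longrightarrow> chain_weight cs < (1/2) ^ n \<Longrightarrow> chain_end x cs \<in> lmult_set x (N n)"
proof (induction "length cs" arbitrary: cs n x rule: less_induct)
  case less
  show ?case
  proof (cases "cs = []")
    case True
    then show ?thesis using unit_in_N[of n] by (auto simp: lmult_set_def intro!: image_eqI[of _ _ e])
  next
    case False
    define h :: real where "h = (1/2) ^ Suc n"
    have "0 < h" unfolding h_def by simp
    from less.prems(2) have weight: "0 + chain_weight cs < 2 * h" by (simp add: h_def)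
    obtain pre c suf where split: "cs = pre @ c # suf" "chain_weight pre < h" "chain_weight suf < h"
      using chain_split[OF False order_refl \<open>0 < h\<close> weight] by auto
    obtain m u where c: "c = (m, u)" by fastforce
    have chains: "chain_in N pre" "u \<in> N m" "chain_in N suf" using less.prems(1) split(1) c by auto
    have "chain_end x pre \<in> lmult_set x (N (Suc n))"
      using less.hyps[of pre "Suc n" x] split chains by (simp add: h_def)
    then obtain a where a: "a \<in> N (Suc n)" "chain_end x pre = x * a" by (auto simp: lmult_set_def)
    have "chain_end (x * a * u) suf \<in> lmult_set (x * a * u) (N (Suc n))"
      using less.hyps[of suf "Suc n" "x * a * u"] split chains by (simp add: h_def)
    then obtain b where b: "b \<in> N (Suc n)" "chain_end (x * a * u) suf = x * a * u * b"
      by (auto simp: lmult_set_def)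
    have "(1/2::real) ^ m \<le> chain_weight cs"
      using split(1) c chain_weight_nonneg[of pre] chain_weight_nonneg[of suf] by simp
    then have "(1/2::real) ^ m < (1/2) ^ n" using less.prems(2) by linarith
    then have "u \<in> N (Suc n)" using chains(2) N_antimono[of "Suc n" m] by auto
    then have "a * u * b \<in> N n" using N_cube a(1) b(1) by blast
    moreover have "chain_end x cs = x * (a * u * b)" using split(1) c a(2) b(2) by (simp add: mult.assoc)
    ultimately show ?thesis by (auto simp: lmult_set_def)
  qed
qed

lemma chain_ball_1_subset: "chain_ball N x 1 \<subseteq> lmult_set x U"
proof
  fix y
  assume "y \<in> chain_ball N x 1"
  then obtain cs where "chain_in N cs" "chain_weight cs < (1/2) ^ 0" "y = chain_end x cs"
    by (auto simp: chain_ball_def)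
  then have "y \<in> lmult_set x (N 0)" using chain_end_in_lmult_N by blast
  then show "y \<in> lmult_set x U" using N_0_subset by (auto simp: lmult_set_def)
qed

lemma chain_end_rmult:
  assumes "balanced_point e" "chain_in N cs"
  shows "\<exists>cs'. chain_in N cs' \<and> chain_weight cs' = chain_weight cs \<and>
    chain_end x cs * z = chain_end (x * z) cs'"
  using assms(2)
proof (induction cs arbitrary: z rule: rev_induct)
  case Nil
  then show ?case by (intro exI[of _ "[]"]) simp
next
  case (snoc c cs)
  obtain n u where c: "c = (n, u)" by fastforce
  then have "u * z \<in> rmult_set (N n) z" using snoc.prems by (auto simp: rmult_set_def)
  then have "u * z \<in> lmult_set z (N n)" using N_balanced[OF assms(1)] by simp
  then obtain u' where u': "u' \<in> N n" "u * z = z * u'" by (auto simp: lmult_set_def)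
  obtain cs' where cs': "chain_in N cs'" "chain_weight cs' = chain_weight cs"
    "chain_end x cs * z = chain_end (x * z) cs'"
    using snoc by auto
  have "chain_end x (cs @ [c]) * z = chain_end x cs * (u * z)" by (simp add: c mult.assoc)
  also have "\<dots> = (chain_end x cs * z) * u'" by (simp add: u'(2) mult.assoc)
  also have "\<dots> = chain_end (x * z) (cs' @ [(n, u')])" by (simp add: cs'(3))
  finally show ?case using cs' u' c by (intro exI[of _ "cs' @ [(n, u')]"]) simp
qed

lemma chain_ball_rmult:
  assumes "balanced_point e" "y \<in> chain_ball N x \<epsilon>"
  shows "y * z \<in> chain_ball N (x * z) \<epsilon>"
proof (cases "1 < \<epsilon>")
  case True
  then show ?thesis by (simp add: chain_ball_def)
next
  case False
  then obtain cs where "chain_in N cs" "chain_weight cs < \<epsilon>" "y = chain_end x cs"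
    using assms(2) by (auto simp: chain_ball_def)
  then show ?thesis
    using chain_end_rmult[OF assms(1), of cs x z] by (auto simp: chain_ball_def)
qed

lemma chain_ball_is_nhd:
  assumes "0 < \<epsilon>"
  shows "is_nhd (chain_ball N x \<epsilon>) x"
proof -
  obtain k where k: "(1/2::real) ^ k < \<epsilon>" using real_arch_pow_inv[OF assms, of "1/2"] by auto
  have "is_nhd (N k) e" using open_N unit_in_N by (auto simp: is_nhd_def)
  then have "is_nhd (lmult_set x (N k)) x" using open_right_unit by (simp add: open_right_unit_def)
  moreover have "lmult_set x (N k) \<subseteq> chain_ball N x \<epsilon>"
  proof
    fix y
    assume "y \<in> lmult_set x (N k)"
    then obtain u where "u \<in> N k" "y = x * u" by (auto simp: lmult_set_def)
    then show "y \<in> chain_ball N x \<epsilon>" using k by (auto simp: chain_ball_def intro!: exI[of _ "[(k, u)]"])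
  qed
  ultimately show ?thesis by (auto simp: is_nhd_def)
qed

lemma chain_ball_continuous_shift:
  assumes "z \<in> chain_ball N y \<delta>"
  shows "\<exists>g. continuous_on UNIV g \<and> g y = z \<and> (\<forall>y'. g y' \<in> chain_ball N y' \<delta>)"
proof (cases "1 < \<delta>")
  case True
  then show ?thesis by (intro exI[of _ "\<lambda>_. z"]) (auto simp: chain_ball_def)
next
  case False
  then obtain cs where "chain_in N cs" "chain_weight cs < \<delta>" "z = chain_end y cs"
    using assms by (auto simp: chain_ball_def)
  then show ?thesis
    using continuous_on_chain_end[OF topological_semigroup]
    by (intro exI[of _ "\<lambda>y'. chain_end y' cs"]) (auto simp: chain_ball_def)
qed

sublocale ball_system "chain_ball N"
proof
  show "topological_semigroup TYPE('a)" by (rule topological_semigroup)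
next
  fix \<epsilon> :: real and x :: 'a
  assume "\<epsilon> \<le> 0"
  then show "chain_ball N x \<epsilon> = {}" using chain_ball_pos by (meson equals0I not_le)
next
  fix \<epsilon> :: real and x :: 'a
  assume "0 < \<epsilon>"
  then show "x \<in> chain_ball N x \<epsilon>" by (auto simp: chain_ball_def intro!: exI[of _ "[]"])
next
  fix \<epsilon> :: real and x y :: 'a
  assume "1 < \<epsilon>"
  then show "y \<in> chain_ball N x \<epsilon>" by (simp add: chain_ball_def)
next
  fix \<epsilon> \<delta> :: real and x :: 'a
  assume "\<epsilon> \<le> \<delta>"
  then show "chain_ball N x \<epsilon> \<subseteq> chain_ball N x \<delta>" by (force simp: chain_ball_def)
next
  fix \<epsilon> :: real and x y :: 'a
  assume y: "y \<in> chain_ball N x \<epsilon>"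
  then consider "1 < \<epsilon>" | cs where "chain_in N cs" "chain_weight cs < \<epsilon>" "y = chain_end x cs"
    by (auto simp: chain_ball_def)
  then show "\<exists>\<epsilon>'<\<epsilon>. y \<in> chain_ball N x \<epsilon>'"
  proof cases
    case 1
    then show ?thesis by (intro exI[of _ "(1 + \<epsilon>) / 2"]) (auto simp: chain_ball_def)
  next
    case 2
    then show ?thesis by (intro exI[of _ "(chain_weight cs + \<epsilon>) / 2"]) (auto simp: chain_ball_def)
  qed
next
  fix \<epsilon> \<delta> :: real and x y z :: 'a
  assume y: "y \<in> chain_ball N x \<epsilon>" and z: "z \<in> chain_ball N y \<delta>"
  have "0 < \<epsilon>" "0 < \<delta>" using chain_ball_pos y z by blast+
  show "z \<in> chain_ball N x (\<epsilon> + \<delta>)"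
  proof (cases "1 < \<epsilon> \<or> 1 < \<delta>")
    case True
    then show ?thesis using \<open>0 < \<epsilon>\<close> \<open>0 < \<delta>\<close> by (auto simp: chain_ball_def)
  next
    case False
    then obtain cs ds where "chain_in N cs" "chain_weight cs < \<epsilon>" "y = chain_end x cs"
      "chain_in N ds" "chain_weight ds < \<delta>" "z = chain_end y ds"
      using y z by (auto simp: chain_ball_def)
    then show ?thesis by (auto simp: chain_ball_def intro!: exI[of _ "cs @ ds"])
  qed
next
  fix \<epsilon> :: real and x y z :: 'a
  assume "y \<in> chain_ball N x \<epsilon>"
  then show "z * y \<in> chain_ball N (z * x) \<epsilon>" by (auto simp: chain_ball_def chain_end_lmult)
qed (fact chain_ball_is_nhd chain_ball_continuous_shift)+

lemma dball_d_1_subset: "dball d x 1 \<subseteq> lmult_set x U"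
  using chain_ball_1_subset by (simp add: dball_d)

lemma dball_regularization_d_1_subset:
  "dball (regularization d) x 1 \<subseteq> interior (closure (lmult_set x U))"
  using dball_regularization_d_1 interior_mono[OF closure_mono[OF chain_ball_1_subset]] by blast

lemma balanced_subinvariant:
  assumes "balanced_point e"
  shows "subinvariant d" "subinvariant (regularization d)"
  using chain_ball_rmult[OF assms] left_subinvariant_d left_subinvariant_regularization_d
    right_subinvariant_d right_subinvariant_regularization_d
  by (simp_all add: subinvariant_def)

end

lemma nhd_tower_cube_nhd_seq:
  fixes e :: "'a::{semigroup_mult,topological_space}"
  assumes ts: "topological_semigroup TYPE('a)" and oru: "open_right_unit e"
    and U: "open U" "e \<in> U"
  shows "nhd_tower e U (cube_nhd_seq e U)"
proof -
  have ru: "right_unit e" using oru by (simp add: open_right_unit_def)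
  note cube = cube_nhd[OF ts ru]
  have open_unit: "open (cube_nhd_seq e U n) \<and> e \<in> cube_nhd_seq e U n" for n
    by (induction n) (use cube U in auto)
  show ?thesis
  proof
    fix a b c :: 'a and n
    assume "a \<in> cube_nhd_seq e U (Suc n)" "b \<in> cube_nhd_seq e U (Suc n)" "c \<in> cube_nhd_seq e U (Suc n)"
    then show "a * b * c \<in> cube_nhd_seq e U n" using cube(3) open_unit[of n] by simp
  next
    show "cube_nhd_seq e U 0 \<subseteq> U"
    proof
      fix a
      assume "a \<in> cube_nhd_seq e U 0"
      then have "a * e * e \<in> U" using cube(2,3)[OF U] by simp
      then show "a \<in> U" using ru by (simp add: right_unit_def)
    qed
  next
    fix x :: 'a and n
    assume "balanced_point e"
    then show "lmult_set x (cube_nhd_seq e U n) = rmult_set (cube_nhd_seq e U n) x"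
      using cube(4) U open_unit by (cases n) auto
  qed (use ts oru open_unit in auto)
qed

theorem theorem6p1:
  fixes e :: "'a::{semigroup_mult,topological_space}"
  assumes "topological_semigroup TYPE('a)"
    and "open_right_unit e"
    and "open U" and "e \<in> U"
  shows "\<exists>d :: 'a \<Rightarrow> 'a \<Rightarrow> real.
     premetric d \<and> (\<forall>x y. 0 \<le> d x y \<and> d x y \<le> 1) \<and>
     regularization d = semiregularization d \<and>
     (\<forall>x y. regularization d x y \<le> d x y) \<and>
     (quasi_pseudometric d \<and> left_subinvariant d \<and> dist_continuous d \<and> has_open_balls d) \<and>
     (quasi_pseudometric (regularization d) \<and> left_subinvariant (regularization d) \<and>
        right_continuous (regularization d) \<and> dist_continuous (regularization d)) \<and>
     (\<forall>x. dball d x 1 \<subseteq> lmult_set x U \<and>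
          dball (regularization d) x 1 \<subseteq> interior (closure (lmult_set x U))) \<and>
     (balanced_point e \<longrightarrow> subinvariant d \<and> subinvariant (regularization d))"
proof -
  interpret nhd_tower e U "cube_nhd_seq e U"
    using nhd_tower_cube_nhd_seq[OF assms] .
  show ?thesis
    using quasi_pseudometric_d d_nonneg d_le_1 semiregularization_eq_regularization_d
      regularization_le_d left_subinvariant_d dist_continuous_d has_open_balls_d
      quasi_pseudometric_regularization_d left_subinvariant_regularization_d
      right_continuous_regularization_d dist_continuous_regularization_d
      dball_d_1_subset dball_regularization_d_1_subset balanced_subinvariant
    by (intro exI[of _ d]) (simp add: quasi_pseudometric_def)
qed

end
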